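(* For $j=1,2$, let $G_j$ be a 2-step stratified Lie group with Lie algebra $\mathfrak{g}_j=\mathfrak{v}_j\oplus\mathfrak{z}_j$ and let $L_j$ be a sublaplacian on $G_j$ such that $(G_j,L_j)$ satisfies Assumption (A). Suppose $\dim\mathfrak{z}_1=\dim\mathfrak{z}_2$, and let $\phi:\mathfrak{z}_1\to\mathfrak{z}_2$ be a linear isomorphism. Let $G$ be the quotient of $G_1\times G_2$ obtained by identifying the centers via $\phi$, i.e. the connected simply connected group with Lie algebra $\mathfrak{v}_1\times\mathfrak{v}_2\times\mathfrak{z}_2$ and bracket $[(v_1,v_2,z),(v_1',v_2',z')]=(0,0,\phi([v_1,v_1'])+[v_2,v_2'])$, and let $L=L_1^\sharp+L_2^\sharp$, where $L_j^\sharp$ is the pushforward of $L_j$ to $G$. Then $(G,L)$ satisfies Assumption (A).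
   Context: For a 2-step group with Lie algebra $\mathfrak{g}=\mathfrak{v}\oplus\mathfrak{z}$ ($\mathfrak{z}$ the center, $\mathfrak{v}$ a complement), a sublaplacian $L=-\sum_jX_j^2$ ($\{X_j\}$ a basis of $\mathfrak{v}$) determines the inner product $\langle\cdot,\cdot\rangle$ on $\mathfrak{v}$ for which $\{X_j\}$ is orthonormal. For $\eta\in\mathfrak{z}^*$, $J_\eta$ is the endomorphism of $\mathfrak{v}$ with $\eta([x,x'])=\langle J_\eta x,x'\rangle$. Assumption (A): there exist integers $r_1,\dots,r_k>0$ and an orthogonal decomposition $\mathfrak{v}=\mathfrak{v}_1\oplus\dots\oplus\mathfrak{v}_k$ with orthogonal projections $P_j$ such that for all $\eta\in\mathfrak{z}^*\setminus\{0\}$ and all $j$, $J_\eta P_j=P_jJ_\eta$ and $J_\eta^2P_j$ has rank $2r_j$ and a unique nonzero eigenvalue. The pushforward $L_j^\sharp$ is the left-invariant operator $-\sum_l (X_{l}^{(j)})^2$ on $G$ obtained by regarding an orthonormal basis $\{X^{(j)}_l\}$ of $\mathfrak{v}_j$ as elements of $\mathfrak{v}_1\times\mathfrak{v}_2\times\mathfrak{z}_2$. *)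

theory Defs
  imports "HOL-Analysis.Analysis"
begin

text \<open>A 2-step stratified Lie algebra g = v + z (z the center, [v,v] = z) is encoded by its
  bracket restricted to v, a bilinear skew map v x v -> z. The inner product on v is the one
  of the euclidean_space type 'v, i.e. the one making the basis defining the sublaplacian
  orthonormal.\<close>

definition strat2 :: "('v::euclidean_space \<Rightarrow> 'v \<Rightarrow> 'z::euclidean_space) \<Rightarrow> bool" where
  "strat2 \<beta> \<longleftrightarrow> bilinear \<beta> \<and> (\<forall>x y. \<beta> x y = - \<beta> y x)
     \<and> span (range (\<lambda>(x, y). \<beta> x y)) = UNIV
     \<and> (\<forall>x. (\<forall>y. \<beta> x y = 0) \<longrightarrow> x = 0)"

definition Jmap :: "('v::euclidean_space \<Rightarrow> 'v \<Rightarrow> 'z) \<Rightarrow> ('z \<Rightarrow> real) \<Rightarrow> 'v \<Rightarrow> 'v" where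
  "Jmap \<beta> \<eta> = (THE J. linear J \<and> (\<forall>x x'. \<eta> (\<beta> x x') = inner (J x) x'))"

definition assumptionA :: "('v::euclidean_space \<Rightarrow> 'v \<Rightarrow> 'z::euclidean_space) \<Rightarrow> bool" where
  "assumptionA \<beta> \<longleftrightarrow>
    (\<exists>(k::nat) (r::nat \<Rightarrow> nat) (V::nat \<Rightarrow> 'v set) (P::nat \<Rightarrow> 'v \<Rightarrow> 'v).
       (\<forall>j<k. r j > 0)
     \<and> (\<forall>j<k. subspace (V j))
     \<and> (\<forall>i<k. \<forall>j<k. i \<noteq> j \<longrightarrow> (\<forall>x\<in>V i. \<forall>y\<in>V j. inner x y = 0))
     \<and> (\<forall>x. \<exists>u. (\<forall>j<k. u j \<in> V j) \<and> x = (\<Sum>j<k. u j))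
     \<and> (\<forall>j<k. \<forall>x. P j x \<in> V j \<and> (\<forall>y\<in>V j. inner (x - P j x) y = 0))
     \<and> (\<forall>\<eta>::'z \<Rightarrow> real. linear \<eta> \<and> \<eta> \<noteq> (\<lambda>_. 0) \<longrightarrow>
          (\<forall>j<k. Jmap \<beta> \<eta> \<circ> P j = P j \<circ> Jmap \<beta> \<eta>
              \<and> dim (range (Jmap \<beta> \<eta> \<circ> Jmap \<beta> \<eta> \<circ> P j)) = 2 * r j
              \<and> (\<exists>!\<mu>::real. \<mu> \<noteq> 0 \<and>
                   (\<exists>x. x \<noteq> 0 \<and> (Jmap \<beta> \<eta> \<circ> Jmap \<beta> \<eta> \<circ> P j) x = \<mu> *\<^sub>R x)))))"

definition glued_bracket ::
  "('z1 \<Rightarrow> 'z2::real_vector) \<Rightarrow> ('v1 \<Rightarrow> 'v1 \<Rightarrow> 'z1) \<Rightarrow> ('v2 \<Rightarrow> 'v2 \<Rightarrow> 'z2)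
    \<Rightarrow> 'v1 \<times> 'v2 \<Rightarrow> 'v1 \<times> 'v2 \<Rightarrow> 'z2" where
  "glued_bracket \<phi> \<beta>1 \<beta>2 x y = \<phi> (\<beta>1 (fst x) (fst y)) + \<beta>2 (snd x) (snd y)"

end

theory Submission
  imports Defs
begin

text \<open>For a functional \<open>\<eta>\<close> on \<open>z\<^sub>2\<close>, the map \<open>J\<^sub>\<eta>\<close> of the glued bracket is the
  product of the maps \<open>J\<^sub>\<eta>\<^sub>\<circ>\<^sub>\<phi>\<close> of \<open>\<beta>\<^sub>1\<close> and \<open>J\<^sub>\<eta>\<close> of \<open>\<beta>\<^sub>2\<close>, and \<open>\<eta> \<circ> \<phi> \<noteq> 0\<close> whenever
  \<open>\<eta> \<noteq> 0\<close> because \<open>\<phi>\<close> is onto. So concatenating the decompositions of \<open>v\<^sub>1\<close> and \<open>v\<^sub>2\<close>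
  gives a decomposition of \<open>v\<^sub>1 \<times> v\<^sub>2\<close> each of whose blocks lives in one factor, where
  Assumption (A) for that factor applies verbatim.\<close>

definition unique_nonzero_eigenvalue :: "('v::real_vector \<Rightarrow> 'v) \<Rightarrow> bool" where
  "unique_nonzero_eigenvalue A \<longleftrightarrow> (\<exists>!\<mu>. \<mu> \<noteq> 0 \<and> (\<exists>x. x \<noteq> 0 \<and> A x = \<mu> *\<^sub>R x))"

definition uniform_block :: "('v::real_vector \<Rightarrow> 'v) \<Rightarrow> ('v \<Rightarrow> 'v) \<Rightarrow> nat \<Rightarrow> bool" where
  "uniform_block J P r \<longleftrightarrow> J \<circ> P = P \<circ> J \<and> dim (range (J \<circ> J \<circ> P)) = 2 * r
     \<and> unique_nonzero_eigenvalue (J \<circ> J \<circ> P)"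

definition orthogonal_decomposition ::
    "nat \<Rightarrow> (nat \<Rightarrow> 'v::real_inner set) \<Rightarrow> (nat \<Rightarrow> 'v \<Rightarrow> 'v) \<Rightarrow> bool" where
  "orthogonal_decomposition k V P \<longleftrightarrow>
     (\<forall>j<k. subspace (V j))
   \<and> (\<forall>i<k. \<forall>j<k. i \<noteq> j \<longrightarrow> (\<forall>x\<in>V i. \<forall>y\<in>V j. inner x y = 0))
   \<and> (\<forall>x. \<exists>u. (\<forall>j<k. u j \<in> V j) \<and> x = (\<Sum>j<k. u j))
   \<and> (\<forall>j<k. \<forall>x. P j x \<in> V j \<and> (\<forall>y\<in>V j. inner (x - P j x) y = 0))"

lemma assumptionA_iff:
  "assumptionA \<beta> \<longleftrightarrow> (\<exists>k r V P. (\<forall>j<k. 0 < r j) \<and> orthogonal_decomposition k V P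
     \<and> (\<forall>\<eta>. linear \<eta> \<and> \<eta> \<noteq> (\<lambda>_. 0) \<longrightarrow> (\<forall>j<k. uniform_block (Jmap \<beta> \<eta>) (P j) (r j))))"
  unfolding assumptionA_def orthogonal_decomposition_def uniform_block_def
    unique_nonzero_eigenvalue_def
  by (simp only: conj_assoc all_conj_distrib)

lemma Jmap_eqI:
  assumes "linear J" and "\<And>x x'. \<eta> (\<beta> x x') = inner (J x) x'"
  shows "Jmap \<beta> \<eta> = J"
  unfolding Jmap_def
proof (rule the_equality)
  fix J' assume J': "linear J' \<and> (\<forall>x x'. \<eta> (\<beta> x x') = inner (J' x) x')"
  show "J' = J"
  proof
    fix x
    have "inner (J' x - J x) y = 0" for y
      using J' assms(2) by (simp add: inner_diff_left)
    then show "J' x = J x" by (metis inner_eq_zero_iff right_minus_eq)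
  qed
qed (use assms in blast)

lemma
  fixes \<beta> :: "'v::euclidean_space \<Rightarrow> 'v \<Rightarrow> 'z::real_vector"
  assumes \<beta>: "bilinear \<beta>" and \<eta>: "linear \<eta>"
  shows linear_Jmap: "linear (Jmap \<beta> \<eta>)"
    and inner_Jmap: "\<eta> (\<beta> x x') = inner (Jmap \<beta> \<eta> x) x'"
proof -
  \<comment> \<open>Riesz representation of the functional \<open>\<eta> (\<beta> x _)\<close> in the basis.\<close>
  define J where "J x = (\<Sum>b\<in>Basis. \<eta> (\<beta> x b) *\<^sub>R b)" for x
  have "linear J"
    by (rule linearI) (simp_all add: J_def bilinear_ladd[OF \<beta>] bilinear_lmul[OF \<beta>]
        linear_add[OF \<eta>] linear_scale[OF \<eta>] scaleR_add_left sum.distrib scaleR_sum_right)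
  moreover have J: "\<eta> (\<beta> x x') = inner (J x) x'" for x x'
  proof -
    have "\<beta> x x' = (\<Sum>b\<in>Basis. (x' \<bullet> b) *\<^sub>R \<beta> x b)"
      using linear_sum[of "\<beta> x" "\<lambda>b. (x' \<bullet> b) *\<^sub>R b" Basis] \<beta>
      by (simp add: euclidean_representation bilinear_def linear_scale)
    then show ?thesis
      by (simp add: J_def linear_sum[OF \<eta>] linear_scale[OF \<eta>] inner_sum_left)
        (simp add: inner_commute mult.commute)
  qed
  ultimately have "Jmap \<beta> \<eta> = J" by (rule Jmap_eqI)
  with \<open>linear J\<close> J show "linear (Jmap \<beta> \<eta>)" "\<eta> (\<beta> x x') = inner (Jmap \<beta> \<eta> x) x'"
    by simp_all
qed

lemma Jmap_glued_bracket:
  fixes \<beta>1 :: "'v1::euclidean_space \<Rightarrow> 'v1 \<Rightarrow> 'z1::real_vector"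
    and \<beta>2 :: "'v2::euclidean_space \<Rightarrow> 'v2 \<Rightarrow> 'z2::real_vector"
  assumes "bilinear \<beta>1" "bilinear \<beta>2" "linear \<phi>" "linear \<eta>"
  shows "Jmap (glued_bracket \<phi> \<beta>1 \<beta>2) \<eta> = map_prod (Jmap \<beta>1 (\<eta> \<circ> \<phi>)) (Jmap \<beta>2 \<eta>)"
proof (rule Jmap_eqI)
  have "linear (\<eta> \<circ> \<phi>)" using assms(3,4) by (rule linear_compose)
  note J1 = linear_Jmap[OF assms(1) this] inner_Jmap[OF assms(1) this]
  note J2 = linear_Jmap[OF assms(2,4)] inner_Jmap[OF assms(2,4)]
  show "linear (map_prod (Jmap \<beta>1 (\<eta> \<circ> \<phi>)) (Jmap \<beta>2 \<eta>))"
    using J1(1) J2(1) by (intro linearI) (auto simp: linear_add linear_scale)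
  show "\<eta> (glued_bracket \<phi> \<beta>1 \<beta>2 x x') = inner (map_prod (Jmap \<beta>1 (\<eta> \<circ> \<phi>)) (Jmap \<beta>2 \<eta>) x) x'"
    for x x'
    using J1(2) J2(2) assms(4)
    by (cases x; cases x') (simp add: glued_bracket_def linear_add)
qed

lemma dim_range_Pair_zero:
  fixes A :: "'a::euclidean_space \<Rightarrow> 'a" and B :: "'b::euclidean_space \<Rightarrow> 'b"
  shows "dim (range (\<lambda>x::'a \<times> 'b. (A (fst x), 0::'b))) = dim (range A)"
    and "dim (range (\<lambda>x::'a \<times> 'b. (0::'a, B (snd x)))) = dim (range B)"
proof -
  have "range (\<lambda>x::'a \<times> 'b. (A (fst x), 0::'b)) = (\<lambda>a. (a, 0)) ` range A"
    by (auto simp: image_iff)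
  moreover have "dim ((\<lambda>a. (a, 0::'b)) ` range A) = dim (range A)"
    by (rule dim_image_eq) (auto intro!: linearI simp: inj_on_def)
  ultimately show "dim (range (\<lambda>x::'a \<times> 'b. (A (fst x), 0::'b))) = dim (range A)"
    by (simp only:)
  have "range (\<lambda>x::'a \<times> 'b. (0::'a, B (snd x))) = (\<lambda>b. (0, b)) ` range B"
    by (auto simp: image_iff)
  moreover have "dim ((\<lambda>b. (0::'a, b)) ` range B) = dim (range B)"
    by (rule dim_image_eq) (auto intro!: linearI simp: inj_on_def)
  ultimately show "dim (range (\<lambda>x::'a \<times> 'b. (0::'a, B (snd x)))) = dim (range B)"
    by (simp only:)
qed

lemma unique_nonzero_eigenvalue_Pair_zero:
  fixes A :: "'a::real_vector \<Rightarrow> 'a" and B :: "'b::real_vector \<Rightarrow> 'b"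
  shows "unique_nonzero_eigenvalue (\<lambda>x::'a \<times> 'b. (A (fst x), 0)) \<longleftrightarrow> unique_nonzero_eigenvalue A"
    and "unique_nonzero_eigenvalue (\<lambda>x::'a \<times> 'b. (0, B (snd x))) \<longleftrightarrow> unique_nonzero_eigenvalue B"
proof -
  \<comment> \<open>For \<open>\<mu> \<noteq> 0\<close> an eigenvector must vanish in the other factor.\<close>
  have "(\<mu> \<noteq> 0 \<and> (\<exists>x::'a \<times> 'b. x \<noteq> 0 \<and> (A (fst x), 0) = \<mu> *\<^sub>R x))
      \<longleftrightarrow> (\<mu> \<noteq> 0 \<and> (\<exists>a. a \<noteq> 0 \<and> A a = \<mu> *\<^sub>R a))" for \<mu>
    by (auto simp: prod_eq_iff)
  then show "unique_nonzero_eigenvalue (\<lambda>x::'a \<times> 'b. (A (fst x), 0)) \<longleftrightarrow> unique_nonzero_eigenvalue A"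
    by (simp add: unique_nonzero_eigenvalue_def)
  have "(\<mu> \<noteq> 0 \<and> (\<exists>x::'a \<times> 'b. x \<noteq> 0 \<and> (0, B (snd x)) = \<mu> *\<^sub>R x))
      \<longleftrightarrow> (\<mu> \<noteq> 0 \<and> (\<exists>b. b \<noteq> 0 \<and> B b = \<mu> *\<^sub>R b))" for \<mu>
    by (auto simp: prod_eq_iff)
  then show "unique_nonzero_eigenvalue (\<lambda>x::'a \<times> 'b. (0, B (snd x))) \<longleftrightarrow> unique_nonzero_eigenvalue B"
    by (simp add: unique_nonzero_eigenvalue_def)
qed

lemma uniform_block_map_prod:
  fixes J1 Q1 :: "'a::euclidean_space \<Rightarrow> 'a" and J2 Q2 :: "'b::euclidean_space \<Rightarrow> 'b"
  shows "uniform_block J1 Q1 r \<Longrightarrow> J2 0 = 0 \<Longrightarrow>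
           uniform_block (map_prod J1 J2) (\<lambda>x. (Q1 (fst x), 0)) r"
    and "uniform_block J2 Q2 r \<Longrightarrow> J1 0 = 0 \<Longrightarrow>
           uniform_block (map_prod J1 J2) (\<lambda>x. (0, Q2 (snd x))) r"
proof -
  assume block: "uniform_block J1 Q1 r" and "J2 0 = 0"
  then have commute: "map_prod J1 J2 \<circ> (\<lambda>x. (Q1 (fst x), 0)) = (\<lambda>x. (Q1 (fst x), 0)) \<circ> map_prod J1 J2"
    by (auto simp: uniform_block_def fun_eq_iff)
  have square: "map_prod J1 J2 \<circ> map_prod J1 J2 \<circ> (\<lambda>x. (Q1 (fst x), 0))
      = (\<lambda>x. ((J1 \<circ> J1 \<circ> Q1) (fst x), 0))"
    using \<open>J2 0 = 0\<close> by auto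
  show "uniform_block (map_prod J1 J2) (\<lambda>x. (Q1 (fst x), 0)) r"
    using block unfolding uniform_block_def commute square
    by (simp only: dim_range_Pair_zero unique_nonzero_eigenvalue_Pair_zero)
next
  assume block: "uniform_block J2 Q2 r" and "J1 0 = 0"
  then have commute: "map_prod J1 J2 \<circ> (\<lambda>x. (0, Q2 (snd x))) = (\<lambda>x. (0, Q2 (snd x))) \<circ> map_prod J1 J2"
    by (auto simp: uniform_block_def fun_eq_iff)
  have square: "map_prod J1 J2 \<circ> map_prod J1 J2 \<circ> (\<lambda>x. (0, Q2 (snd x)))
      = (\<lambda>x. (0, (J2 \<circ> J2 \<circ> Q2) (snd x)))"
    using \<open>J1 0 = 0\<close> by auto
  show "uniform_block (map_prod J1 J2) (\<lambda>x. (0, Q2 (snd x))) r"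
    using block unfolding uniform_block_def commute square
    by (simp only: dim_range_Pair_zero unique_nonzero_eigenvalue_Pair_zero)
qed

definition seq_append :: "nat \<Rightarrow> (nat \<Rightarrow> 'a) \<Rightarrow> (nat \<Rightarrow> 'a) \<Rightarrow> nat \<Rightarrow> 'a" where
  "seq_append k f g j = (if j < k then f j else g (j - k))"

lemma sum_seq_append:
  "(\<Sum>j<k + l. seq_append k f g j) = (\<Sum>j<k. f j) + (\<Sum>j<l. g j)"
  by (induct l) (simp_all add: seq_append_def add.assoc)

lemma orthogonal_decomposition_Times:
  fixes V :: "nat \<Rightarrow> 'a::real_inner set" and W :: "nat \<Rightarrow> 'b::real_inner set"
  assumes V: "orthogonal_decomposition k V P" and W: "orthogonal_decomposition l W Q"
  shows "orthogonal_decomposition (k + l) (seq_append k (\<lambda>j. V j \<times> {0}) (\<lambda>j. {0} \<times> W j))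
           (seq_append k (\<lambda>j x. (P j (fst x), 0)) (\<lambda>j x. (0, Q j (snd x))))"
    (is "orthogonal_decomposition _ ?V ?P")
  unfolding orthogonal_decomposition_def
proof (intro conjI allI impI ballI)
  fix j assume "j < k + l"
  then show "subspace (?V j)"
    using V W by (auto simp: orthogonal_decomposition_def seq_append_def
        intro!: subspace_Times)
next
  fix i j x y assume "i < k + l" "j < k + l" "i \<noteq> j" "x \<in> ?V i" "y \<in> ?V j"
  moreover have "\<forall>x'\<in>V i. \<forall>y'\<in>V j. inner x' y' = 0" if "i < k" "j < k"
    using V that \<open>i \<noteq> j\<close> by (simp add: orthogonal_decomposition_def)
  moreover have "\<forall>x'\<in>W (i - k). \<forall>y'\<in>W (j - k). inner x' y' = 0" if "\<not> i < k" "\<not> j < k"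
  proof -
    have "i - k < l" "j - k < l" "i - k \<noteq> j - k"
      using that \<open>i \<noteq> j\<close> \<open>i < k + l\<close> \<open>j < k + l\<close> by auto
    with W show ?thesis by (simp add: orthogonal_decomposition_def)
  qed
  ultimately show "inner x y = 0"
    by (auto simp: seq_append_def split: if_splits)
next
  fix x :: "'a \<times> 'b"
  obtain u where u: "\<forall>j<k. u j \<in> V j" "fst x = (\<Sum>j<k. u j)"
    using V unfolding orthogonal_decomposition_def by meson
  obtain w where w: "\<forall>j<l. w j \<in> W j" "snd x = (\<Sum>j<l. w j)"
    using W unfolding orthogonal_decomposition_def by meson
  define v where "v = seq_append k (\<lambda>j. (u j, 0)) (\<lambda>j. (0, w j))"
  have "\<forall>j<k + l. v j \<in> ?V j"
    using u(1) w(1) by (simp add: v_def seq_append_def)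
  moreover have "x = (\<Sum>j<k + l. v j)"
    unfolding v_def sum_seq_append using u(2) w(2) by (simp add: prod_eq_iff fst_sum snd_sum)
  ultimately show "\<exists>u. (\<forall>j<k + l. u j \<in> ?V j) \<and> x = (\<Sum>j<k + l. u j)" by blast
next
  fix j and x :: "'a \<times> 'b" assume "j < k + l"
  have "P j (fst x) \<in> V j \<and> (\<forall>y\<in>V j. inner (fst x - P j (fst x)) y = 0)" if "j < k"
    using V that by (simp add: orthogonal_decomposition_def)
  moreover have "Q (j - k) (snd x) \<in> W (j - k)
      \<and> (\<forall>y\<in>W (j - k). inner (snd x - Q (j - k) (snd x)) y = 0)" if "\<not> j < k"
    using W that \<open>j < k + l\<close> by (simp add: orthogonal_decomposition_def)
  ultimately show "?P j x \<in> ?V j" and "\<And>y. y \<in> ?V j \<Longrightarrow> inner (x - ?P j x) y = 0"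
    by (auto simp: seq_append_def inner_Pair_0 split: if_splits)
qed

theorem proposition6p2:
  fixes \<beta>1 :: "'v1::euclidean_space \<Rightarrow> 'v1 \<Rightarrow> 'z1::euclidean_space"
    and \<beta>2 :: "'v2::euclidean_space \<Rightarrow> 'v2 \<Rightarrow> 'z2::euclidean_space"
    and \<phi> :: "'z1 \<Rightarrow> 'z2"
  assumes "strat2 \<beta>1" and "strat2 \<beta>2"
    and "assumptionA \<beta>1" and "assumptionA \<beta>2"
    and "DIM('z1) = DIM('z2)"
    and "linear \<phi>" and "bij \<phi>"
  shows "assumptionA (glued_bracket \<phi> \<beta>1 \<beta>2)"
proof -
  have \<beta>: "bilinear \<beta>1" "bilinear \<beta>2"
    using assms(1,2) by (simp_all add: strat2_def)
  obtain k1 r1 V1 P1 where r1: "\<forall>j<k1. 0 < r1 j" and D1: "orthogonal_decomposition k1 V1 P1"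
    and A1: "\<forall>\<eta>. linear \<eta> \<and> \<eta> \<noteq> (\<lambda>_. 0) \<longrightarrow> (\<forall>j<k1. uniform_block (Jmap \<beta>1 \<eta>) (P1 j) (r1 j))"
    using assms(3) unfolding assumptionA_iff by blast
  obtain k2 r2 V2 P2 where r2: "\<forall>j<k2. 0 < r2 j" and D2: "orthogonal_decomposition k2 V2 P2"
    and A2: "\<forall>\<eta>. linear \<eta> \<and> \<eta> \<noteq> (\<lambda>_. 0) \<longrightarrow> (\<forall>j<k2. uniform_block (Jmap \<beta>2 \<eta>) (P2 j) (r2 j))"
    using assms(4) unfolding assumptionA_iff by blast
  define P where "P = seq_append k1 (\<lambda>j x. (P1 j (fst x), 0)) (\<lambda>j x. (0, P2 j (snd x)))"
  have "uniform_block (Jmap (glued_bracket \<phi> \<beta>1 \<beta>2) \<eta>) (P j) (seq_append k1 r1 r2 j)"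
    if \<eta>: "linear \<eta>" "\<eta> \<noteq> (\<lambda>_. 0)" and "j < k1 + k2" for \<eta> j
  proof -
    have "linear (\<eta> \<circ> \<phi>)" using assms(6) \<eta>(1) by (rule linear_compose)
    moreover have "\<eta> \<circ> \<phi> \<noteq> (\<lambda>_. 0)"
      using \<eta>(2) bij_is_surj[OF assms(7)] by (auto simp: fun_eq_iff) (metis surjD)
    ultimately have "Jmap \<beta>1 (\<eta> \<circ> \<phi>) 0 = 0" "Jmap \<beta>2 \<eta> 0 = 0"
      and "j < k1 \<Longrightarrow> uniform_block (Jmap \<beta>1 (\<eta> \<circ> \<phi>)) (P1 j) (r1 j)"
      and "\<not> j < k1 \<Longrightarrow> uniform_block (Jmap \<beta>2 \<eta>) (P2 (j - k1)) (r2 (j - k1))"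
      using \<beta> \<eta> A1 A2 \<open>j < k1 + k2\<close> by (simp_all add: linear_0 linear_Jmap)
    then show ?thesis
      unfolding Jmap_glued_bracket[OF \<beta> assms(6) \<eta>(1)] P_def seq_append_def
      by (simp add: uniform_block_map_prod)
  qed
  moreover have "\<forall>j<k1 + k2. 0 < seq_append k1 r1 r2 j"
    using r1 r2 by (simp add: seq_append_def)
  ultimately show ?thesis
    unfolding assumptionA_iff P_def using orthogonal_decomposition_Times[OF D1 D2] by blast
qed

end
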